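(* Let $(M,\mathcal{T})$ be a closed pseudo $3$-manifold with $v(e)\ge9$ for every $e\in E$. Let $\{l(t):t\in[0,\infty)\}\subset\mathbb{R}^E_{>0}$ be the solution of the extended Ricci flow with initial data $l^0\in(0,\operatorname{arccosh}2)^E$ satisfying $l^0_e\in(\operatorname{arccosh}(1+\mu_{v(e)}),\operatorname{arccosh}(b_{v(e)}))$ for all $e\in E$. If there exists $t_0>0$ with $\sup\{l_e(t):0\le t\le t_0,\ e\in E\}\le\operatorname{arccosh}2$, then for all $t\in[0,t_0]$ and all $e\in E$, $$l_e(t)\in[\operatorname{arccosh}(1+\mu_{v(e)}),\operatorname{arccosh}b_{v(e)}]\subset(0,\operatorname{arccosh}2].$$
   Context: A closed pseudo $3$-manifold $(M,\mathcal{T})$: a finite disjoint union $\widehat{\mathcal{T}}$ of tetrahedra with faces glued in pairs by affine homeomorphisms; $\mathcal{T}$ the quotient complex, $E$ its edge set, $P_E$ the quotient map on edges, $v(e)=|P_E^{-1}(e)|$. For an interval $I$, $I^E=\{l: l_e\in I\ \forall e\}$. For $l\in\mathbb{R}^E_{>0}$ each edge $\hat e$ of $\widehat{\mathcal{T}}$ gets length $l_{P_E(\hat e)}$; in a tetrahedron with vertices $i,j,k,h$ let $x_{ab}=\cosh$(length of $ab$) and $$\phi_{ij}=\frac{x_{ik}x_{ih}+x_{jk}x_{jh}+x_{ij}x_{ik}x_{jh}+x_{ij}x_{ih}x_{jk}-x_{ij}^2x_{kh}+x_{kh}}{\sqrt{2x_{ij}x_{ik}x_{jk}+x_{ij}^2+x_{ik}^2+x_{jk}^2-1}\sqrt{2x_{ij}x_{ih}x_{jh}+x_{ij}^2+x_{ih}^2+x_{jh}^2-1}},$$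 dihedral angle $\alpha_{ij}=\arccos(\max\{-1,\min\{\phi_{ij},1\}\})$; $\widetilde K_e(l)=2\pi-\sum_{\hat e\in P_E^{-1}(e)}\alpha(\hat e)$. Extended Ricci flow: $\frac{d}{dt}l_e=\widetilde K_e(l)l_e$, $l(0)=l^0$ (unique solution for all $t\ge0$). Constants: $b_9=2$, $b_n=\frac{16}{1+\cos(2\pi/n)}-7$ ($n\ge10$). $\eta_\xi(y)=\frac{-2-5y+(1+\xi)^2+\sqrt{(2+5y-(1+\xi)^2)^2+4(2+y)(1-y)(1+\xi)^2}}{2+y}$; $\xi_1=0$, $\xi_{k+1}=\eta_{\xi_k}(\cos(2\pi/9))$, $\xi_\infty=\lim_k\xi_k$ (the sequence is nondecreasing and bounded); $\mu_n=\eta_{\xi_\infty}(\cos(2\pi/n))$ for $n\ge9$. *)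

theory Defs
  imports "HOL-Analysis.Analysis"
begin

text \<open>A finite set T of tetrahedra; every tetrahedron has vertices 0,1,2,3.
  A face is a pair (t,k), meaning the face of t opposite to vertex k.
  The gluing is a fixed-point-free involution g on the set of faces together
  with, for every face f, the vertex bijection phi f from the vertices of f
  onto the vertices of g f (this determines the affine gluing map);
  phi (g f) is the inverse of phi f.  Closedness: every face is glued.\<close>

definition tet_faces :: "'a set \<Rightarrow> ('a \<times> nat) set" where
  "tet_faces T = {(t,k). t \<in> T \<and> k < 4}"

definition hat_edges :: "'a set \<Rightarrow> ('a \<times> nat set) set" where
  "hat_edges T = {(t,S). t \<in> T \<and> S \<subseteq> {..<4} \<and> card S = 2}"

definition closed_pseudo_3_manifold ::
  "'a set \<Rightarrow> ('a \<times> nat \<Rightarrow> 'a \<times> nat) \<Rightarrow> ('a \<times> nat \<Rightarrow> nat \<Rightarrow> nat) \<Rightarrow> bool" where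
  "closed_pseudo_3_manifold T g \<phi> \<longleftrightarrow> finite T \<and>
     (\<forall>f\<in>tet_faces T. g f \<in> tet_faces T \<and> g f \<noteq> f \<and> g (g f) = f \<and>
        bij_betw (\<phi> f) ({..<4} - {snd f}) ({..<4} - {snd (g f)}) \<and>
        (\<forall>v\<in>{..<4} - {snd f}. \<phi> (g f) (\<phi> f v) = v))"

definition edge_glue ::
  "'a set \<Rightarrow> ('a \<times> nat \<Rightarrow> 'a \<times> nat) \<Rightarrow> ('a \<times> nat \<Rightarrow> nat \<Rightarrow> nat) \<Rightarrow> (('a \<times> nat set) \<times> ('a \<times> nat set)) set" where
  "edge_glue T g \<phi> = {((t,S),(t',S')). (t,S) \<in> hat_edges T \<and>
      (\<exists>k<4. k \<notin> S \<and> fst (g (t,k)) = t' \<and> S' = \<phi> (t,k) ` S)}"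

definition edge_rel ::
  "'a set \<Rightarrow> ('a \<times> nat \<Rightarrow> 'a \<times> nat) \<Rightarrow> ('a \<times> nat \<Rightarrow> nat \<Rightarrow> nat) \<Rightarrow> (('a \<times> nat set) \<times> ('a \<times> nat set)) set" where
  "edge_rel T g \<phi> = Id_on (hat_edges T) \<union> (edge_glue T g \<phi> \<union> (edge_glue T g \<phi>)\<inverse>)\<^sup>+"

definition edges :: "'a set \<Rightarrow> ('a \<times> nat \<Rightarrow> 'a \<times> nat) \<Rightarrow> ('a \<times> nat \<Rightarrow> nat \<Rightarrow> nat) \<Rightarrow> ('a \<times> nat set) set set" where
  "edges T g \<phi> = hat_edges T // edge_rel T g \<phi>"

definition proj_edge ::
  "'a set \<Rightarrow> ('a \<times> nat \<Rightarrow> 'a \<times> nat) \<Rightarrow> ('a \<times> nat \<Rightarrow> nat \<Rightarrow> nat) \<Rightarrow> 'a \<times> nat set \<Rightarrow> ('a \<times> nat set) set" where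
  "proj_edge T g \<phi> he = edge_rel T g \<phi> `` {he}"

definition valence :: "('a \<times> nat set) set \<Rightarrow> nat" where
  "valence e = card e"

definition phi_formula :: "real \<Rightarrow> real \<Rightarrow> real \<Rightarrow> real \<Rightarrow> real \<Rightarrow> real \<Rightarrow> real" where
  "phi_formula xij xik xih xjk xjh xkh =
     (xik * xih + xjk * xjh + xij * xik * xjh + xij * xih * xjk - xij^2 * xkh + xkh) /
     (sqrt (2 * xij * xik * xjk + xij^2 + xik^2 + xjk^2 - 1) *
      sqrt (2 * xij * xih * xjh + xij^2 + xih^2 + xjh^2 - 1))"

definition dihedral ::
  "'a set \<Rightarrow> ('a \<times> nat \<Rightarrow> 'a \<times> nat) \<Rightarrow> ('a \<times> nat \<Rightarrow> nat \<Rightarrow> nat) \<Rightarrow>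
   (('a \<times> nat set) set \<Rightarrow> real) \<Rightarrow> 'a \<times> nat set \<Rightarrow> real" where
  "dihedral T g \<phi> l he =
    (let t = fst he; S = snd he; C = {..<4} - S;
         i = Min S; j = Max S; k = Min C; h = Max C;
         x = (\<lambda>a b. cosh (l (proj_edge T g \<phi> (t, {a,b}))))
     in arccos (max (-1) (min (phi_formula (x i j) (x i k) (x i h) (x j k) (x j h) (x k h)) 1)))"

definition ext_curv ::
  "'a set \<Rightarrow> ('a \<times> nat \<Rightarrow> 'a \<times> nat) \<Rightarrow> ('a \<times> nat \<Rightarrow> nat \<Rightarrow> nat) \<Rightarrow>
   (('a \<times> nat set) set \<Rightarrow> real) \<Rightarrow> ('a \<times> nat set) set \<Rightarrow> real" where
  "ext_curv T g \<phi> l e = 2 * pi - (\<Sum>he\<in>e. dihedral T g \<phi> l he)"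

definition ext_ricci_flow_solution ::
  "'a set \<Rightarrow> ('a \<times> nat \<Rightarrow> 'a \<times> nat) \<Rightarrow> ('a \<times> nat \<Rightarrow> nat \<Rightarrow> nat) \<Rightarrow>
   (real \<Rightarrow> ('a \<times> nat set) set \<Rightarrow> real) \<Rightarrow> (('a \<times> nat set) set \<Rightarrow> real) \<Rightarrow> bool" where
  "ext_ricci_flow_solution T g \<phi> l l0 \<longleftrightarrow>
     (\<forall>e\<in>edges T g \<phi>. l 0 e = l0 e) \<and>
     (\<forall>t\<ge>0. \<forall>e\<in>edges T g \<phi>. l t e > 0) \<and>
     (\<forall>t\<ge>0. \<forall>e\<in>edges T g \<phi>.
        ((\<lambda>s. l s e) has_real_derivative (ext_curv T g \<phi> (l t) e * l t e)) (at t within {0..}))"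

definition b_const :: "nat \<Rightarrow> real" where
  "b_const n = (if n = 9 then 2 else 16 / (1 + cos (2 * pi / real n)) - 7)"

definition eta :: "real \<Rightarrow> real \<Rightarrow> real" where
  "eta \<xi> y = (-2 - 5*y + (1+\<xi>)^2 +
      sqrt ((2 + 5*y - (1+\<xi>)^2)^2 + 4*(2+y)*(1-y)*(1+\<xi>)^2)) / (2 + y)"

text \<open>xi_seq k is xi_(k+1) of the paper: xi_1 = 0, xi_(k+1) = eta_(xi_k)(cos(2 pi/9)).\<close>
fun xi_seq :: "nat \<Rightarrow> real" where
  "xi_seq 0 = 0"
| "xi_seq (Suc k) = eta (xi_seq k) (cos (2 * pi / 9))"

definition xi_inf :: real where
  "xi_inf = lim xi_seq"

definition mu_const :: "nat \<Rightarrow> real" where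
  "mu_const n = eta xi_inf (cos (2 * pi / real n))"

end

theory Submission
  imports Defs
begin

text \<open>The cosine phi of the dihedral angle at an edge of cosh-length a is nondecreasing in
  the four adjacent cosh-lengths and nonincreasing in the opposite one, as long as all of
  them lie in [1, 2]. So while every length stays in (0, arcosh 2], phi is squeezed between
  its values at the extreme configurations. At an edge of valence n with
  l_e = arcosh (1 + mu_n) this gives phi > cos (2 pi / n), so all n dihedral angles are
  smaller than 2 pi / n, the curvature is positive and the flow pushes l_e up; at
  l_e = arcosh b_n with n \<ge> 10 it gives phi < cos (2 pi / n), so the curvature is negative
  and l_e is pushed down. For n = 9 we have b_9 = 2 and the upper bound is the hypothesis.\<close>

section \<open>Monotonicity of the dihedral cosine\<close>

text \<open>In phi_formula a p q r s c the arguments are the cosh-lengths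
  x_ij, x_ik, x_ih, x_jk, x_jh, x_kh.\<close>

lemma phi_formula_swap_ij: "phi_formula a p q r s c = phi_formula a r s p q c"
  unfolding phi_formula_def by (simp add: algebra_simps)

lemma phi_formula_swap_kh: "phi_formula a p q r s c = phi_formula a q p s r c"
  unfolding phi_formula_def by (simp add: algebra_simps)

lemma phi_formula_face_term_pos:
  fixes x y z :: real
  assumes "1 \<le> x" "1 \<le> y" "1 \<le> z"
  shows "0 < 2 * x * y * z + x^2 + y^2 + z^2 - 1"
proof -
  have "1 \<le> x^2" "1 \<le> y^2" "1 \<le> z^2" using assms by (simp_all add: one_le_power)
  moreover have "0 \<le> x * y * z" using assms by simp
  ultimately show ?thesis by linarith
qed

lemma has_real_derivative_divide_sqrt:
  fixes N Q :: "real \<Rightarrow> real"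
  assumes N: "(N has_real_derivative N') (at x)" and Q: "(Q has_real_derivative Q') (at x)"
    and pos: "Q x > 0" and k: "k > 0"
  shows "((\<lambda>x. N x / (sqrt (Q x) * k)) has_real_derivative
           (N' * Q x - N x * Q' / 2) / (Q x * sqrt (Q x) * k)) (at x)"
proof -
  define S where "S = sqrt (Q x)"
  have S: "S > 0" "Q x = S * S" using pos by (auto simp: S_def)
  have "((\<lambda>x. N x / (sqrt (Q x) * k)) has_real_derivative
     (N' * (S * k) - N x * (inverse S * Q' / 2 * k)) / ((S * k) * (S * k))) (at x)"
    unfolding S_def using pos k by (auto intro!: derivative_eq_intros N Q)
  also have "(N' * (S * k) - N x * (inverse S * Q' / 2 * k)) / ((S * k) * (S * k))
     = (N' * Q x - N x * Q' / 2) / (Q x * S * k)"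
    using S k by (simp add: field_simps)
  finally show ?thesis unfolding S_def .
qed

text \<open>The derivative of phi_formula a x q r s c in x is (a^2 - 1) times
  this quantity over a positive denominator.\<close>
lemma phi_formula_deriv_factor_nonneg:
  fixes a x q r s c :: real
  assumes "1 \<le> a" "1 \<le> x" "1 \<le> q" "q \<le> 2" "1 \<le> r" "r \<le> 2" "1 \<le> s" "1 \<le> c"
  shows "0 \<le> q + a * s + r * x * s - r^2 * q + c * (x + a * r)"
proof -
  have "1 \<le> r^2" using assms by (simp add: one_le_power)
  hence "q * (1 - r^2) \<ge> 2 * (1 - r^2)" using assms by (intro mult_right_mono_neg) auto
  moreover have "a \<le> a * s" using assms mult_left_mono[of 1 s a] by simp
  moreover have "r * x \<le> r * x * s" using assms mult_left_mono[of 1 s "r * x"] by simp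
  moreover have "x + a * r \<le> c * (x + a * r)" using assms mult_right_mono[of 1 c "x + a * r"] by simp
  moreover have "r * x \<ge> r" "a * r \<ge> r" using assms by simp_all
  moreover have "r^2 \<le> 2 + r" using assms mult_right_mono[of r 2 r] unfolding power2_eq_square by linarith
  ultimately show ?thesis using assms by argo
qed

lemma phi_formula_mono_ik:
  fixes a p p' q r s c :: real
  assumes a: "1 \<le> a" and p: "1 \<le> p" "p \<le> p'" "p' \<le> 2"
    and qrsc: "1 \<le> q" "q \<le> 2" "1 \<le> r" "r \<le> 2" "1 \<le> s" "1 \<le> c"
  shows "phi_formula a p q r s c \<le> phi_formula a p' q r s c"
proof -
  define N where "N = (\<lambda>x::real. x * q + r * s + a * x * s + a * q * r - a^2 * c + c)"
  define Q where "Q = (\<lambda>x::real. 2 * a * x * r + a^2 + x^2 + r^2 - 1)"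
  define Q2 where "Q2 = 2 * a * q * s + a^2 + q^2 + s^2 - 1"
  have phi_eq: "phi_formula a x q r s c = N x / (sqrt (Q x) * sqrt Q2)" for x
    by (simp add: phi_formula_def N_def Q_def Q2_def)
  have Q2: "Q2 > 0" unfolding Q2_def using a qrsc by (intro phi_formula_face_term_pos)
  have Q: "Q x > 0" if "1 \<le> x" for x unfolding Q_def using a qrsc that by (intro phi_formula_face_term_pos)
  have "N p / (sqrt (Q p) * sqrt Q2) \<le> N p' / (sqrt (Q p') * sqrt Q2)"
  proof (rule DERIV_nonneg_imp_nondecreasing[OF p(2)])
    fix x assume x: "p \<le> x" "x \<le> p'"
    have "((\<lambda>x. N x / (sqrt (Q x) * sqrt Q2)) has_real_derivative
            ((q + a * s) * Q x - N x * (2 * a * r + 2 * x) / 2) / (Q x * sqrt (Q x) * sqrt Q2)) (at x)"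
      using Q[of x] Q2 x p
      by (intro has_real_derivative_divide_sqrt) (auto intro!: derivative_eq_intros simp: N_def Q_def)
    moreover have "(q + a * s) * Q x - N x * (2 * a * r + 2 * x) / 2
        = (a^2 - 1) * (q + a * s + r * x * s - r^2 * q + c * (x + a * r))"
      by (simp add: N_def Q_def field_simps power2_eq_square)
    moreover have "0 \<le> q + a * s + r * x * s - r^2 * q + c * (x + a * r)"
      using a qrsc x p by (intro phi_formula_deriv_factor_nonneg) auto
    moreover have "0 \<le> a^2 - 1" using a by (simp add: one_le_power)
    ultimately show "\<exists>y. ((\<lambda>x. N x / (sqrt (Q x) * sqrt Q2)) has_real_derivative y) (at x) \<and> 0 \<le> y"
      using Q[of x] Q2 x p by (intro exI conjI) (assumption, simp)
  qed
  thus ?thesis by (simp add: phi_eq)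
qed

lemma phi_formula_mono:
  fixes a p p' q q' r r' s s' c :: real
  assumes a: "1 \<le> a" and c: "1 \<le> c"
    and "1 \<le> p" "p \<le> p'" "p' \<le> 2" "1 \<le> q" "q \<le> q'" "q' \<le> 2"
    and "1 \<le> r" "r \<le> r'" "r' \<le> 2" "1 \<le> s" "s \<le> s'" "s' \<le> 2"
  shows "phi_formula a p q r s c \<le> phi_formula a p' q' r' s' c"
proof -
  have "phi_formula a p q r s c \<le> phi_formula a p' q r s c"
    using assms by (intro phi_formula_mono_ik) auto
  also have "\<dots> = phi_formula a q p' s r c" by (rule phi_formula_swap_kh)
  also have "\<dots> \<le> phi_formula a q' p' s r c"
    using assms by (intro phi_formula_mono_ik) auto
  also have "\<dots> = phi_formula a r s p' q' c" by (metis phi_formula_swap_ij phi_formula_swap_kh)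
  also have "\<dots> \<le> phi_formula a r' s p' q' c"
    using assms by (intro phi_formula_mono_ik) auto
  also have "\<dots> = phi_formula a s r' q' p' c" by (rule phi_formula_swap_kh)
  also have "\<dots> \<le> phi_formula a s' r' q' p' c"
    using assms by (intro phi_formula_mono_ik) auto
  also have "\<dots> = phi_formula a p' q' r' s' c" by (metis phi_formula_swap_ij phi_formula_swap_kh)
  finally show ?thesis .
qed

lemma phi_formula_antimono_kh:
  fixes a p q r s c c' :: real
  assumes "1 \<le> a" "c' \<le> c" "1 \<le> p" "1 \<le> q" "1 \<le> r" "1 \<le> s"
  shows "phi_formula a p q r s c \<le> phi_formula a p q r s c'"
proof -
  have "0 < sqrt (2 * a * p * r + a^2 + p^2 + r^2 - 1) * sqrt (2 * a * q * s + a^2 + q^2 + s^2 - 1)"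
    using assms by (intro mult_pos_pos real_sqrt_gt_zero phi_formula_face_term_pos)
  moreover have "(a^2 - 1) * c' \<le> (a^2 - 1) * c"
    using assms by (intro mult_left_mono) (auto simp: one_le_power)
  ultimately show ?thesis
    unfolding phi_formula_def by (intro divide_right_mono) (auto simp: algebra_simps)
qed

lemma phi_formula_ge:
  fixes a p q r s c :: real
  assumes "1 \<le> a" "1 \<le> p" "p \<le> 2" "1 \<le> q" "q \<le> 2" "1 \<le> r" "r \<le> 2" "1 \<le> s" "s \<le> 2"
    "1 \<le> c" "c \<le> 2"
  shows "2 * (2 - a) / (1 + a) \<le> phi_formula a p q r s c"
proof -
  have "2 * a * 1 * 1 + a^2 + 1^2 + 1^2 - 1 = (1 + a)^2" by (simp add: power2_eq_square algebra_simps)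
  hence "sqrt (2 * a * 1 * 1 + a^2 + 1^2 + 1^2 - 1) = 1 + a" using assms by simp
  moreover have "1 * 1 + 1 * 1 + a * 1 * 1 + a * 1 * 1 - a^2 * 2 + 2 = 2 * (2 - a) * (1 + a)"
    by (simp add: power2_eq_square algebra_simps)
  ultimately have "2 * (2 - a) / (1 + a) = phi_formula a 1 1 1 1 2"
    unfolding phi_formula_def using assms by (simp add: power2_eq_square)
  also have "\<dots> \<le> phi_formula a 1 1 1 1 c" using assms by (intro phi_formula_antimono_kh) auto
  also have "\<dots> \<le> phi_formula a p q r s c" using assms by (intro phi_formula_mono) auto
  finally show ?thesis .
qed

lemma phi_formula_le:
  fixes a p q r s c :: real
  assumes "1 \<le> a" "1 \<le> p" "p \<le> 2" "1 \<le> q" "q \<le> 2" "1 \<le> r" "r \<le> 2" "1 \<le> s" "s \<le> 2" "1 \<le> c"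
  shows "phi_formula a p q r s c \<le> (8 + 8 * a + c - a^2 * c) / (a^2 + 8 * a + 7)"
proof -
  have "phi_formula a p q r s c \<le> phi_formula a 2 2 2 2 c" using assms by (intro phi_formula_mono) auto
  also have "\<dots> = (8 + 8 * a + c - a^2 * c) / (a^2 + 8 * a + 7)"
  proof -
    have "0 \<le> a^2 + 8 * a + 7" using assms by simp
    thus ?thesis by (simp add: phi_formula_def algebra_simps)
  qed
  finally show ?thesis .
qed

section \<open>The constants b_n and mu_n\<close>

lemma one_minus_half_square_le_cos: "1 - x^2 / 2 \<le> cos (x::real)"
proof -
  have "\<bar>sin (x/2)\<bar> \<le> \<bar>x/2\<bar>" by (rule abs_sin_x_le_abs_x)
  hence "sin (x/2) ^ 2 \<le> (x/2)^2" by (metis abs_ge_zero power2_abs power_mono)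
  moreover have "cos x = 1 - 2 * sin (x/2) ^ 2" using cos_double_sin[of "x/2"] by simp
  ultimately show ?thesis by (simp add: power2_eq_square)
qed

lemma cos_2pi_div_bounds:
  assumes "n \<ge> 9"
  shows "3/4 \<le> cos (2 * pi / real n)" "cos (2 * pi / real n) < 1"
    "n \<ge> 10 \<Longrightarrow> 7/9 \<le> cos (2 * pi / real n)"
proof -
  define x where "x = 2 * pi / real n"
  have x: "0 < x" "x * real n = 2 * pi" using assms by (simp_all add: x_def)
  have sq: "1 - d^2 / 2 \<le> cos x" if "x \<le> d" for d
  proof -
    have "x^2 \<le> d^2" using x(1) that by (intro power_mono) auto
    thus ?thesis using one_minus_half_square_le_cos[of x] by linarith
  qed
  have pi: "pi \<le> 3.15" using pi_approx by simp
  have "x * 9 \<le> x * real n" using x(1) assms by simp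
  hence "x \<le> 7/10" using x(2) pi by simp
  from sq[OF this] show "3/4 \<le> cos (2 * pi / real n)" by (simp add: x_def power2_eq_square)
  have "0 < sin (pi / real n)" using assms by (intro sin_gt_zero) (auto simp: field_simps)
  moreover have "cos (2 * pi / real n) = 1 - 2 * sin (pi / real n) ^ 2"
    using cos_double_sin[of "pi / real n"] by simp
  ultimately show "cos (2 * pi / real n) < 1" by simp
  assume "n \<ge> 10"
  hence "x * 10 \<le> x * real n" using x(1) by simp
  hence "x \<le> 63/100" using x(2) pi by simp
  from sq[OF this] show "7/9 \<le> cos (2 * pi / real n)" by (simp add: x_def power2_eq_square)
qed

lemma b_const_bounds:
  assumes "n \<ge> 9"
  shows "1 < b_const n" "b_const n \<le> 2"
proof -
  have "1 < b_const n \<and> b_const n \<le> 2"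
  proof (cases "n = 9")
    case False
    hence "n \<ge> 10" using assms by simp
    with cos_2pi_div_bounds[OF assms] have "8 < 16 / (1 + cos (2 * pi / real n))"
      "16 / (1 + cos (2 * pi / real n)) \<le> 9"
      by (simp_all add: field_simps)
    thus ?thesis using False by (simp add: b_const_def)
  qed (simp add: b_const_def)
  thus "1 < b_const n" "b_const n \<le> 2" by auto
qed

lemma cos_2pi_div_eq_b_const:
  assumes "n \<ge> 10"
  shows "cos (2 * pi / real n) = (9 - b_const n) / (b_const n + 7)"
proof -
  have y: "3/4 \<le> cos (2 * pi / real n)" using cos_2pi_div_bounds assms by simp
  have "b_const n = 16 / (1 + cos (2 * pi / real n)) - 7" using assms by (simp add: b_const_def)
  hence e: "b_const n + 7 = 16 / (1 + cos (2 * pi / real n))"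
    "9 - b_const n = 16 - 16 / (1 + cos (2 * pi / real n))" by simp_all
  show ?thesis unfolding e using y by (simp add: field_simps)
qed

lemma eta_bounds:
  fixes \<xi> y :: real
  assumes "0 \<le> \<xi>" "\<xi> \<le> 1/4" "3/4 \<le> y" "y < 1"
  shows "0 < eta \<xi> y" "eta \<xi> y < 2 * (1 - y) / (2 + y)"
proof -
  define t where "t = (1 + \<xi>)^2"
  have "1 \<le> t" using assms by (simp add: t_def one_le_power)
  have "(1 + \<xi>)^2 \<le> (5/4)^2" by (rule power_mono) (use assms in auto)
  hence "t \<le> 25/16" unfolding t_def by (simp add: power2_eq_square)
  define B where "B = 2 + 5 * y - t"
  define X where "X = 4 * (2 + y) * (1 - y) * t"
  have e: "eta \<xi> y = (- B + sqrt (B^2 + X)) / (2 + y)" by (simp add: eta_def B_def X_def t_def)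
  have "X > 0" using assms \<open>1 \<le> t\<close> by (simp add: X_def)
  hence "sqrt (B^2) < sqrt (B^2 + X)" by (intro real_sqrt_less_mono) simp
  hence "B < sqrt (B^2 + X)" by simp
  thus "0 < eta \<xi> y" unfolding e using assms by simp
  define R where "R = 4 + 3 * y - t"
  have "(3 + y) * t \<le> (3 + y) * (25/16)" using \<open>t \<le> 25/16\<close> assms by (intro mult_left_mono) auto
  hence "0 < 3 + 4 * y - (3 + y) * t" using assms by (simp add: algebra_simps)
  hence "0 < 4 * (1 - y) * (3 + 4 * y - (3 + y) * t)" using assms by simp
  moreover have "R^2 - (B^2 + X) = 4 * (1 - y) * (3 + 4 * y - (3 + y) * t)"
    unfolding R_def B_def X_def by (simp add: power2_eq_square algebra_simps)
  ultimately have "sqrt (B^2 + X) < sqrt (R^2)" by (intro real_sqrt_less_mono) linarith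
  moreover have "R > 0" using assms \<open>t \<le> 25/16\<close> by (simp add: R_def)
  ultimately have "eta \<xi> y < (- B + R) / (2 + y)" unfolding e using assms by (simp add: divide_strict_right_mono)
  also have "\<dots> = 2 * (1 - y) / (2 + y)" by (simp add: B_def R_def)
  finally show "eta \<xi> y < 2 * (1 - y) / (2 + y)" .
qed

lemma add_sqrt_quadratic_mono:
  fixes B k t1 t2 :: real
  assumes "0 \<le> k" "k \<le> 4 * B" "0 \<le> t1" "t1 \<le> t2"
  shows "t1 + sqrt ((B - t1)^2 + k * t1) \<le> t2 + sqrt ((B - t2)^2 + k * t2)"
proof -
  define S where "S = sqrt ((B - t2)^2 + k * t2)"
  have "0 \<le> (B - t2)^2 + k * t2" using assms by simp
  hence S: "0 \<le> S" "S^2 = (B - t2)^2 + k * t2" by (simp_all add: S_def)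
  have "(B - t2 - k/2)^2 \<le> S^2"
  proof -
    have "S^2 - (B - t2 - k/2)^2 = k * (B - k/4)" unfolding S(2) by (simp add: power2_eq_square algebra_simps)
    moreover have "0 \<le> k * (B - k/4)" using assms by simp
    ultimately show ?thesis by simp
  qed
  hence "B - t2 - k/2 \<le> S" using S(1) abs_le_square_iff[of "B - t2 - k/2" S] by simp
  hence "(t2 - t1) * (2 * B - 2 * t2 - k) \<le> (t2 - t1) * (2 * S)" using assms by (intro mult_left_mono) auto
  hence "(B - t1)^2 + k * t1 \<le> (S + (t2 - t1))^2"
    unfolding power2_sum S(2) by (simp add: power2_eq_square algebra_simps)
  hence "sqrt ((B - t1)^2 + k * t1) \<le> sqrt ((S + (t2 - t1))^2)" by (rule real_sqrt_le_mono)
  also have "\<dots> = S + (t2 - t1)" using S(1) assms by simp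
  finally show ?thesis by (simp add: S_def)
qed

lemma eta_mono:
  fixes \<xi>1 \<xi>2 y :: real
  assumes "0 \<le> \<xi>1" "\<xi>1 \<le> \<xi>2" "0 \<le> y" "y < 1"
  shows "eta \<xi>1 y \<le> eta \<xi>2 y"
proof -
  define k where "k = 4 * (2 + y) * (1 - y)"
  define B where "B = 2 + 5 * y"
  have "0 \<le> k" using assms by (simp add: k_def)
  moreover have "k \<le> 4 * B" using assms by (simp add: k_def B_def algebra_simps)
  moreover have "eta \<xi> y = (- B + (1 + \<xi>)^2 + sqrt ((B - (1 + \<xi>)^2)^2 + k * (1 + \<xi>)^2)) / (2 + y)" for \<xi>
    by (simp add: eta_def k_def B_def)
  moreover have "(1 + \<xi>1)^2 + sqrt ((B - (1 + \<xi>1)^2)^2 + k * (1 + \<xi>1)^2)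
      \<le> (1 + \<xi>2)^2 + sqrt ((B - (1 + \<xi>2)^2)^2 + k * (1 + \<xi>2)^2)"
    using assms \<open>0 \<le> k\<close> \<open>k \<le> 4 * B\<close> by (intro add_sqrt_quadratic_mono power_mono) auto
  ultimately show ?thesis using assms by (simp add: divide_right_mono)
qed

lemma xi_seq_bounds: "0 \<le> xi_seq k \<and> xi_seq k \<le> xi_seq (Suc k) \<and> xi_seq (Suc k) \<le> 1/4"
proof -
  define y where "y = cos (2 * pi / 9)"
  have y: "3/4 \<le> y" "y < 1" using cos_2pi_div_bounds[of 9] by (simp_all add: y_def)
  have "2 * (1 - y) / (2 + y) \<le> 1/4" using y by (simp add: field_simps)
  hence eta_le: "eta \<xi> y \<le> 1/4" if "0 \<le> \<xi>" "\<xi> \<le> 1/4" for \<xi>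
    using eta_bounds[OF that y] by linarith
  have step: "xi_seq (Suc k) = eta (xi_seq k) y" for k by (simp add: y_def)
  show ?thesis
  proof (induction k)
    case 0
    show ?case using eta_bounds[of 0 y] y eta_le[of 0] step[of 0] by simp
  next
    case (Suc k)
    hence "xi_seq (Suc k) \<le> xi_seq (Suc (Suc k))"
      unfolding step[of "Suc k"] step[of k] using y by (intro eta_mono) auto
    moreover have "xi_seq (Suc (Suc k)) \<le> 1/4"
      unfolding step[of "Suc k"] using Suc by (intro eta_le) auto
    ultimately show ?case using Suc by auto
  qed
qed

lemma xi_inf_bounds: "0 \<le> xi_inf" "xi_inf \<le> 1/4"
proof -
  have inc: "incseq xi_seq" using xi_seq_bounds by (intro incseq_SucI) auto
  have bdd: "xi_seq i \<le> 1/4" for i using xi_seq_bounds[of i] by linarith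
  obtain L where L: "xi_seq \<longlonglongrightarrow> L" "\<forall>i. xi_seq i \<le> L"
    using incseq_convergent[OF inc] bdd by blast
  have "xi_inf = L" unfolding xi_inf_def using L(1) by (rule limI)
  moreover have "L \<le> 1/4" using L(1) bdd by (intro LIMSEQ_le_const2) auto
  moreover have "0 \<le> L" using xi_seq_bounds[of 0] L(2) by (meson order_trans)
  ultimately show "0 \<le> xi_inf" "xi_inf \<le> 1/4" by auto
qed

lemma mu_const_bounds:
  assumes "n \<ge> 9"
  shows "0 < mu_const n" "(1 + mu_const n) * (2 + cos (2 * pi / real n)) < 4 - cos (2 * pi / real n)"
proof -
  note y = cos_2pi_div_bounds[OF assms]
  note e = eta_bounds[OF xi_inf_bounds y(1,2)]
  show "0 < mu_const n" using e by (simp add: mu_const_def)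
  have "mu_const n * (2 + cos (2 * pi / real n)) < 2 * (1 - cos (2 * pi / real n))"
    using e(2) y by (simp add: mu_const_def field_simps)
  thus "(1 + mu_const n) * (2 + cos (2 * pi / real n)) < 4 - cos (2 * pi / real n)"
    by (simp add: algebra_simps)
qed

section \<open>A barrier principle\<close>

text \<open>At the last time s before a violation with f s \<ge> L we have f s = L, and
  f' s > 0 pushes f above L just after s.\<close>
lemma stays_above_barrier:
  fixes f f' :: "real \<Rightarrow> real"
  assumes der: "\<And>t. 0 \<le> t \<Longrightarrow> (f has_real_derivative f' t) (at t within {0..})"
    and f0: "L < f 0"
    and push: "\<And>t. 0 \<le> t \<Longrightarrow> t \<le> T \<Longrightarrow> f t = L \<Longrightarrow> f' t > 0"
  shows "\<forall>t\<in>{0..T}. L \<le> f t"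
proof (rule ccontr)
  assume "\<not> ?thesis"
  then obtain t1 where t1: "0 \<le> t1" "t1 \<le> T" "f t1 < L" by auto
  have "continuous_on {0..} f"
    using der by (auto simp: continuous_on_eq_continuous_within intro: DERIV_continuous)
  hence cont: "continuous_on {0..t1} f" by (rule continuous_on_subset) auto
  define S where "S = {0..t1} \<inter> f -` {L..}"
  have "closed S" unfolding S_def by (rule continuous_closed_preimage[OF cont]) auto
  moreover have "0 \<in> S" using f0 t1 by (simp add: S_def)
  moreover have bdd: "bdd_above S" unfolding S_def by (rule bdd_aboveI[of _ t1]) auto
  ultimately have "Sup S \<in> S" using closed_contains_Sup by blast
  define s where "s = Sup S"
  have sle: "u \<le> s" if "u \<in> S" for u unfolding s_def using bdd that by (simp add: cSup_upper)
  have s: "0 \<le> s" "s < t1" "L \<le> f s"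
    using \<open>Sup S \<in> S\<close> t1 unfolding s_def[symmetric] by (auto simp: S_def less_le)
  have "continuous_on {s..t1} f" by (rule continuous_on_subset[OF cont]) (use s in auto)
  then obtain u where u: "s \<le> u" "u \<le> t1" "f u = L" using IVT2'[of f t1 L s] s t1 by auto
  hence "u \<in> S" using s by (simp add: S_def)
  with u sle have fs: "f s = L" by force
  have "f' s > 0" using push[OF s(1) _ fs] s t1 by simp
  then obtain d where d: "d > 0" "\<And>h. h > 0 \<Longrightarrow> s + h \<in> {0..} \<Longrightarrow> h < d \<Longrightarrow> f s < f (s + h)"
    using has_real_derivative_pos_inc_right[OF der[OF s(1)]] by blast
  define h where "h = min (d/2) (t1 - s)"
  have h: "h > 0" "h < d" "s + h \<le> t1" using d s by (auto simp: h_def)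
  hence "s + h \<in> S" using d(2)[OF h(1) _ h(2)] fs s by (simp add: S_def)
  with sle h show False by force
qed

lemma stays_below_barrier:
  fixes f f' :: "real \<Rightarrow> real"
  assumes der: "\<And>t. 0 \<le> t \<Longrightarrow> (f has_real_derivative f' t) (at t within {0..})"
    and f0: "f 0 < U"
    and push: "\<And>t. 0 \<le> t \<Longrightarrow> t \<le> T \<Longrightarrow> f t = U \<Longrightarrow> f' t < 0"
  shows "\<forall>t\<in>{0..T}. f t \<le> U"
proof -
  have "\<forall>t\<in>{0..T}. - U \<le> - f t"
  proof (rule stays_above_barrier[where f' = "\<lambda>t. - f' t"])
    show "((\<lambda>t. - f t) has_real_derivative - f' t) (at t within {0..})" if "0 \<le> t" for t
      using der[OF that] by (rule DERIV_minus)
    show "- U < - f 0" using f0 by simp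
    show "0 < - f' t" if "0 \<le> t" "t \<le> T" "- f t = - U" for t using push that by fastforce
  qed
  thus ?thesis by simp
qed

lemma edge_glue_subset:
  assumes "closed_pseudo_3_manifold T g \<phi>"
  shows "edge_glue T g \<phi> \<subseteq> hat_edges T \<times> hat_edges T"
proof
  fix z assume "z \<in> edge_glue T g \<phi>"
  then obtain t S t' S' k where z: "z = ((t,S),(t',S'))" "(t,S) \<in> hat_edges T" "k < 4" "k \<notin> S"
    "fst (g (t,k)) = t'" "S' = \<phi> (t,k) ` S"
    unfolding edge_glue_def by auto
  have tS: "t \<in> T" "S \<subseteq> {..<4} - {k}" "card S = 2" using z(2,4) by (auto simp: hat_edges_def)
  have "(t,k) \<in> tet_faces T" using tS z by (simp add: tet_faces_def)
  hence g: "g (t,k) \<in> tet_faces T" "bij_betw (\<phi> (t,k)) ({..<4} - {k}) ({..<4} - {snd (g (t,k))})"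
    using assms unfolding closed_pseudo_3_manifold_def by auto
  have "t' \<in> T" using g(1) z(5) by (auto simp: tet_faces_def)
  moreover have "\<phi> (t,k) ` S \<subseteq> {..<4}" using tS(2) g(2) unfolding bij_betw_def by auto
  moreover have "card (\<phi> (t,k) ` S) = 2"
    using tS g(2) unfolding bij_betw_def by (metis card_image inj_on_subset)
  ultimately show "z \<in> hat_edges T \<times> hat_edges T" using z by (simp add: hat_edges_def)
qed

lemma equiv_edge_rel:
  assumes "closed_pseudo_3_manifold T g \<phi>"
  shows "equiv (hat_edges T) (edge_rel T g \<phi>)"
proof -
  define G where "G = edge_glue T g \<phi> \<union> (edge_glue T g \<phi>)\<inverse>"
  have "G \<subseteq> hat_edges T \<times> hat_edges T" using edge_glue_subset[OF assms] by (auto simp: G_def)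
  hence GH: "G\<^sup>+ \<subseteq> hat_edges T \<times> hat_edges T" by (rule trancl_subset_Sigma)
  have "sym (G\<^sup>+)" by (rule sym_trancl) (auto simp: G_def sym_def)
  moreover have "edge_rel T g \<phi> = Id_on (hat_edges T) \<union> G\<^sup>+" by (simp add: edge_rel_def G_def)
  ultimately show ?thesis using GH
    by (auto intro!: equivI simp: refl_on_def sym_def trans_def intro: trancl_trans)
qed

lemma mem_edgesD:
  assumes "closed_pseudo_3_manifold T g \<phi>" "e \<in> edges T g \<phi>" "he \<in> e"
  shows "he \<in> hat_edges T" "proj_edge T g \<phi> he = e"
proof -
  note equiv = equiv_edge_rel[OF assms(1)]
  obtain x where x: "e = edge_rel T g \<phi> `` {x}"
    using assms(2) unfolding edges_def by (auto elim: quotientE)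
  hence "(x, he) \<in> edge_rel T g \<phi>" using assms(3) by simp
  thus "he \<in> hat_edges T" using equiv_type[OF equiv] by auto
  show "proj_edge T g \<phi> he = e"
    unfolding proj_edge_def x using equiv_class_eq[OF equiv \<open>(x, he) \<in> _\<close>] by simp
qed

lemma proj_edge_in_edges: "he \<in> hat_edges T \<Longrightarrow> proj_edge T g \<phi> he \<in> edges T g \<phi>"
  unfolding proj_edge_def edges_def by (rule quotientI)

lemma cosh_in_one_two:
  fixes x :: real
  assumes "0 < x" "x \<le> arcosh 2"
  shows "cosh x \<in> {1<..2}"
proof -
  have "cosh 0 < cosh x" "cosh x \<le> cosh (arcosh 2)"
    using assms by (simp_all only: cosh_real_nonneg_less_iff cosh_real_nonneg_le_iff)
  thus ?thesis by simp
qed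

lemma card_two_eq_Min_Max:
  fixes A :: "'a::linorder set"
  assumes "card A = 2"
  shows "A = {Min A, Max A}" "Min A \<noteq> Max A"
proof -
  obtain u v where uv: "A = {u,v}" "u \<noteq> v" using assms by (auto simp: card_2_iff)
  show "A = {Min A, Max A}" using uv by (cases "u < v") (auto simp: min_def max_def)
  show "Min A \<noteq> Max A" using uv by (cases "u < v") (auto simp: min_def max_def)
qed

lemma dihedral_eq_arccos_phi_formula:
  assumes M: "closed_pseudo_3_manifold T g \<phi>" and e: "e \<in> edges T g \<phi>" and he: "he \<in> e"
    and l: "\<forall>e'\<in>edges T g \<phi>. 0 < l e' \<and> l e' \<le> arcosh 2"
  shows "\<exists>p q r s c. p \<in> {1<..2} \<and> q \<in> {1<..2} \<and> r \<in> {1<..2} \<and> s \<in> {1<..2} \<and> c \<in> {1<..2} \<and>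
     dihedral T g \<phi> l he = arccos (max (-1) (min (phi_formula (cosh (l e)) p q r s c) 1))"
proof -
  obtain t S where he_eq: "he = (t, S)" by (cases he)
  have "(t, S) \<in> hat_edges T" "proj_edge T g \<phi> (t, S) = e" using mem_edgesD[OF M e he] he_eq by auto
  hence tS: "t \<in> T" "S \<subseteq> {..<4}" "card S = 2" and pe: "proj_edge T g \<phi> (t, S) = e"
    by (auto simp: hat_edges_def)
  define C where "C = {..<4::nat} - S"
  have "card C = 2" unfolding C_def using tS by (simp add: card_Diff_subset finite_subset)
  define i j k h where "i = Min S" "j = Max S" "k = Min C" "h = Max C"
  have S: "S = {i,j}" "i \<noteq> j" and C: "C = {k,h}" "k \<noteq> h"
    using card_two_eq_Min_Max[OF tS(3)] card_two_eq_Min_Max[OF \<open>card C = 2\<close>] by (auto simp: i_j_k_h_def)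
  define x where "x = (\<lambda>u v. cosh (l (proj_edge T g \<phi> (t, {u,v}))))"
  have x: "x u v \<in> {1<..2}" if "u \<in> S \<union> C" "v \<in> S \<union> C" "u \<noteq> v" for u v
  proof -
    have "(t, {u,v}) \<in> hat_edges T" using that tS unfolding C_def by (auto simp: hat_edges_def)
    hence "proj_edge T g \<phi> (t, {u,v}) \<in> edges T g \<phi>" by (rule proj_edge_in_edges)
    thus ?thesis using l cosh_in_one_two unfolding x_def by auto
  qed
  have "x i j = cosh (l e)" unfolding x_def using S pe by simp
  have "dihedral T g \<phi> l he =
      arccos (max (-1) (min (phi_formula (x i j) (x i k) (x i h) (x j k) (x j h) (x k h)) 1))"
    unfolding dihedral_def he_eq Let_def x_def i_j_k_h_def C_def by simp
  hence "dihedral T g \<phi> l he =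
      arccos (max (-1) (min (phi_formula (cosh (l e)) (x i k) (x i h) (x j k) (x j h) (x k h)) 1))"
    unfolding \<open>x i j = cosh (l e)\<close> .
  moreover have "i \<noteq> k" "i \<noteq> h" "j \<noteq> k" "j \<noteq> h" using S C unfolding C_def by auto
  hence "x i k \<in> {1<..2}" "x i h \<in> {1<..2}" "x j k \<in> {1<..2}" "x j h \<in> {1<..2}" "x k h \<in> {1<..2}"
    using C(2) by (auto intro: x simp del: greaterThanAtMost_iff simp add: S C)
  ultimately show ?thesis by (intro exI conjI)
qed

section \<open>Sign of the curvature at the barriers\<close>

lemma ext_curv_pos_if_dihedral_less:
  assumes "valence e > 0" "\<And>he. he \<in> e \<Longrightarrow> dihedral T g \<phi> l he < 2 * pi / valence e"
  shows "0 < ext_curv T g \<phi> l e"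
proof -
  have "finite e" "e \<noteq> {}" using assms(1) by (auto simp: valence_def card_gt_0_iff)
  hence "(\<Sum>he\<in>e. dihedral T g \<phi> l he) < (\<Sum>he\<in>e. 2 * pi / valence e)"
    using assms(2) by (intro sum_strict_mono) auto
  also have "\<dots> = 2 * pi" using assms(1) by (simp add: valence_def)
  finally show ?thesis by (simp add: ext_curv_def)
qed

lemma ext_curv_neg_if_dihedral_greater:
  assumes "valence e > 0" "\<And>he. he \<in> e \<Longrightarrow> 2 * pi / valence e < dihedral T g \<phi> l he"
  shows "ext_curv T g \<phi> l e < 0"
proof -
  have "finite e" "e \<noteq> {}" using assms(1) by (auto simp: valence_def card_gt_0_iff)
  hence "(\<Sum>he\<in>e. 2 * pi / valence e) < (\<Sum>he\<in>e. dihedral T g \<phi> l he)"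
    using assms(2) by (intro sum_strict_mono) auto
  moreover have "(\<Sum>he\<in>e. 2 * pi / valence e) = 2 * pi" using assms(1) by (simp add: valence_def)
  ultimately show ?thesis by (simp add: ext_curv_def)
qed

lemma arccos_cos_2pi_div: "n \<ge> 2 \<Longrightarrow> arccos (cos (2 * pi / real n)) = 2 * pi / real n"
  by (intro arccos_cos) (auto simp: field_simps)

lemma ext_curv_pos_at_lower_barrier:
  assumes M: "closed_pseudo_3_manifold T g \<phi>" and e: "e \<in> edges T g \<phi>" and n: "valence e \<ge> 9"
    and l: "\<forall>e'\<in>edges T g \<phi>. 0 < l e' \<and> l e' \<le> arcosh 2"
    and le: "l e = arcosh (1 + mu_const (valence e))"
  shows "0 < ext_curv T g \<phi> l e"
proof (rule ext_curv_pos_if_dihedral_less)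
  define y where "y = cos (2 * pi / valence e)"
  define a where "a = 1 + mu_const (valence e)"
  have y: "3/4 \<le> y" "y < 1" using cos_2pi_div_bounds[OF n] by (simp_all add: y_def)
  have mu: "0 < mu_const (valence e)" "a * (2 + y) < 4 - y"
    using mu_const_bounds[OF n] by (simp_all add: a_def y_def)
  have "cosh (l e) = a" using mu(1) by (simp add: le a_def)
  have "y * (1 + a) < 2 * (2 - a)" using mu(2) by (simp add: algebra_simps)
  hence ay: "y < 2 * (2 - a) / (1 + a)" using mu(1) by (simp add: a_def pos_less_divide_eq)
  fix he assume "he \<in> e"
  then obtain p q r s c where pqrsc: "p \<in> {1<..2}" "q \<in> {1<..2}" "r \<in> {1<..2}" "s \<in> {1<..2}" "c \<in> {1<..2}"
    and d: "dihedral T g \<phi> l he = arccos (max (-1) (min (phi_formula a p q r s c) 1))"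
    using dihedral_eq_arccos_phi_formula[OF M e _ l] \<open>cosh (l e) = a\<close> by metis
  have "y < phi_formula a p q r s c"
    using ay phi_formula_ge[of a p q r s c] pqrsc mu(1) by (simp add: a_def)
  hence "dihedral T g \<phi> l he < arccos y" unfolding d using y by (intro arccos_less_arccos) auto
  thus "dihedral T g \<phi> l he < 2 * pi / valence e" using arccos_cos_2pi_div n by (simp add: y_def)
qed (use n in simp)

lemma ext_curv_neg_at_upper_barrier:
  assumes M: "closed_pseudo_3_manifold T g \<phi>" and e: "e \<in> edges T g \<phi>" and n: "valence e \<ge> 10"
    and l: "\<forall>e'\<in>edges T g \<phi>. 0 < l e' \<and> l e' \<le> arcosh 2"
    and le: "l e = arcosh (b_const (valence e))"
  shows "ext_curv T g \<phi> l e < 0"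
proof (rule ext_curv_neg_if_dihedral_greater)
  define y where "y = cos (2 * pi / valence e)"
  define a where "a = b_const (valence e)"
  have y: "3/4 \<le> y" "y < 1" using cos_2pi_div_bounds n by (simp_all add: y_def)
  have a: "1 < a" "a \<le> 2" using b_const_bounds n by (simp_all add: a_def)
  have "cosh (l e) = a" using a by (simp add: le a_def)
  have ya: "y = (9 - a) / (a + 7)" using cos_2pi_div_eq_b_const[OF n] by (simp add: a_def y_def)
  fix he assume "he \<in> e"
  then obtain p q r s c where pqrsc: "p \<in> {1<..2}" "q \<in> {1<..2}" "r \<in> {1<..2}" "s \<in> {1<..2}" "c \<in> {1<..2}"
    and d: "dihedral T g \<phi> l he = arccos (max (-1) (min (phi_formula a p q r s c) 1))"
    using dihedral_eq_arccos_phi_formula[OF M e _ l] \<open>cosh (l e) = a\<close> by metis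
  have "(8 + 8 * a + c - a^2 * c) / ((a + 7) * (a + 1)) < (9 - a) * (a + 1) / ((a + 7) * (a + 1))"
  proof (rule divide_strict_right_mono)
    have "0 < (c - 1) * (a^2 - 1)" using pqrsc a by (simp add: one_less_power)
    thus "8 + 8 * a + c - a^2 * c < (9 - a) * (a + 1)" by (simp add: algebra_simps power2_eq_square)
  qed (use a in simp)
  moreover have "a^2 + 8 * a + 7 = (a + 7) * (a + 1)" by (simp add: algebra_simps power2_eq_square)
  ultimately have "phi_formula a p q r s c < y"
    using phi_formula_le[of a p q r s c] pqrsc a ya by simp
  hence "arccos y < dihedral T g \<phi> l he" unfolding d using y by (intro arccos_less_arccos) auto
  thus "2 * pi / valence e < dihedral T g \<phi> l he" using arccos_cos_2pi_div n by (simp add: y_def)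
qed (use n in simp)

lemma ext_ricci_flow_lengths_bounded:
  assumes "ext_ricci_flow_solution T g \<phi> l l0"
    and "\<forall>t\<in>{0..t0}. \<forall>e\<in>edges T g \<phi>. l t e \<le> arcosh 2" and "t \<in> {0..t0}"
  shows "\<forall>e\<in>edges T g \<phi>. 0 < l t e \<and> l t e \<le> arcosh 2"
  using assms unfolding ext_ricci_flow_solution_def by auto

lemma ext_ricci_flow_lower_bound:
  assumes M: "closed_pseudo_3_manifold T g \<phi>" and flow: "ext_ricci_flow_solution T g \<phi> l l0"
    and bound: "\<forall>t\<in>{0..t0}. \<forall>e\<in>edges T g \<phi>. l t e \<le> arcosh 2"
    and e: "e \<in> edges T g \<phi>" and n: "valence e \<ge> 9"
    and init: "arcosh (1 + mu_const (valence e)) < l0 e"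
  shows "\<forall>t\<in>{0..t0}. arcosh (1 + mu_const (valence e)) \<le> l t e"
proof (rule stays_above_barrier)
  show "((\<lambda>s. l s e) has_real_derivative ext_curv T g \<phi> (l t) e * l t e) (at t within {0..})"
    if "0 \<le> t" for t
    using flow that e by (simp add: ext_ricci_flow_solution_def)
  show "arcosh (1 + mu_const (valence e)) < l 0 e" using flow init e by (simp add: ext_ricci_flow_solution_def)
  fix t assume t: "0 \<le> t" "t \<le> t0" "l t e = arcosh (1 + mu_const (valence e))"
  have lt: "\<forall>e'\<in>edges T g \<phi>. 0 < l t e' \<and> l t e' \<le> arcosh 2"
    using ext_ricci_flow_lengths_bounded[OF flow bound] t by simp
  have "0 < ext_curv T g \<phi> (l t) e" by (rule ext_curv_pos_at_lower_barrier[OF M e n lt t(3)])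
  moreover have "0 < l t e" using lt e by simp
  ultimately show "0 < ext_curv T g \<phi> (l t) e * l t e" by simp
qed

lemma ext_ricci_flow_upper_bound:
  assumes M: "closed_pseudo_3_manifold T g \<phi>" and flow: "ext_ricci_flow_solution T g \<phi> l l0"
    and bound: "\<forall>t\<in>{0..t0}. \<forall>e\<in>edges T g \<phi>. l t e \<le> arcosh 2"
    and e: "e \<in> edges T g \<phi>" and n: "valence e \<ge> 9"
    and init: "l0 e < arcosh (b_const (valence e))"
  shows "\<forall>t\<in>{0..t0}. l t e \<le> arcosh (b_const (valence e))"
proof (cases "valence e = 9")
  case True
  thus ?thesis using bound e by (simp add: b_const_def)
next
  case False
  hence n10: "valence e \<ge> 10" using n by simp
  show ?thesis
  proof (rule stays_below_barrier)
    show "((\<lambda>s. l s e) has_real_derivative ext_curv T g \<phi> (l t) e * l t e) (at t within {0..})"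
      if "0 \<le> t" for t
      using flow that e by (simp add: ext_ricci_flow_solution_def)
    show "l 0 e < arcosh (b_const (valence e))" using flow init e by (simp add: ext_ricci_flow_solution_def)
    fix t assume t: "0 \<le> t" "t \<le> t0" "l t e = arcosh (b_const (valence e))"
    have lt: "\<forall>e'\<in>edges T g \<phi>. 0 < l t e' \<and> l t e' \<le> arcosh 2"
      using ext_ricci_flow_lengths_bounded[OF flow bound] t by simp
    have "ext_curv T g \<phi> (l t) e < 0" by (rule ext_curv_neg_at_upper_barrier[OF M e n10 lt t(3)])
    moreover have "0 < l t e" using lt e by simp
    ultimately show "ext_curv T g \<phi> (l t) e * l t e < 0" by (simp add: mult_neg_pos)
  qed
qed

lemma barrier_interval_subset:
  assumes "n \<ge> 9"
  shows "{arcosh (1 + mu_const n)..arcosh (b_const n)} \<subseteq> {0<..arcosh 2}"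
proof -
  have "0 < arcosh (1 + mu_const n)" using mu_const_bounds[OF assms] by simp
  moreover have "arcosh (b_const n) \<le> arcosh 2"
    using b_const_bounds[OF assms] arcosh_less_iff_real[of 2 "b_const n"] by linarith
  ultimately show ?thesis by auto
qed

theorem theorem4p7:
  fixes T :: "'a set"
    and g :: "'a \<times> nat \<Rightarrow> 'a \<times> nat"
    and \<phi> :: "'a \<times> nat \<Rightarrow> nat \<Rightarrow> nat"
    and l :: "real \<Rightarrow> ('a \<times> nat set) set \<Rightarrow> real"
    and l0 :: "('a \<times> nat set) set \<Rightarrow> real"
    and t0 :: real
  assumes M: "closed_pseudo_3_manifold T g \<phi>"
    and val: "\<forall>e\<in>edges T g \<phi>. valence e \<ge> 9"
    and flow: "ext_ricci_flow_solution T g \<phi> l l0"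
    and init0: "\<forall>e\<in>edges T g \<phi>. l0 e \<in> {0<..<arcosh 2}"
    and init: "\<forall>e\<in>edges T g \<phi>.
        l0 e \<in> {arcosh (1 + mu_const (valence e))<..<arcosh (b_const (valence e))}"
    and t0: "t0 > 0"
    and bound: "\<forall>t\<in>{0..t0}. \<forall>e\<in>edges T g \<phi>. l t e \<le> arcosh 2"
  shows "\<forall>t\<in>{0..t0}. \<forall>e\<in>edges T g \<phi>.
           l t e \<in> {arcosh (1 + mu_const (valence e))..arcosh (b_const (valence e))} \<and>
           {arcosh (1 + mu_const (valence e))..arcosh (b_const (valence e))} \<subseteq> {0<..arcosh 2}"
proof (intro ballI conjI)
  fix t e assume t: "t \<in> {0..t0}" and e: "e \<in> edges T g \<phi>"
  have n: "valence e \<ge> 9" using val e by blast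
  show "l t e \<in> {arcosh (1 + mu_const (valence e))..arcosh (b_const (valence e))}"
    using ext_ricci_flow_lower_bound[OF M flow bound e n] ext_ricci_flow_upper_bound[OF M flow bound e n]
      init e t by auto
  show "{arcosh (1 + mu_const (valence e))..arcosh (b_const (valence e))} \<subseteq> {0<..arcosh 2}"
    using barrier_interval_subset[OF n] .
qed

end
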